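(* Let $\varphi$ be an $\mathrm{LTL_{PSL}}$ formula and let $I$ be the set of subformulae of $\varphi$ of the form $s\preceq s'$. Then $\varphi$ is $\mathrm{SLTL}$-satisfiable if and only if there exists a partition $D=(I^+,I^-)$ of $I$ such that $\varphi_D$ is $\mathrm{SLTL}$-satisfiable, where $\varphi_D=\varphi[I^+\mapsto\top,I^-\mapsto\bot]\wedge\chi_D$, $\varphi[I^+\mapsto\top,I^-\mapsto\bot]$ is obtained from $\varphi$ by replacing each member of $I^+$ by $\top$ and each member of $I^-$ by $\bot$, and $\chi_D=G\Big(\bigwedge_{(s\preceq s')\in I^+}(s\preceq s')\wedge\bigwedge_{(s\preceq s')\in I^-}\big(\Diamond_s p_{s,s'}\wedge\neg\Diamond_{s'}p_{s,s'}\big)\Big)$ with each $p_{s,s'}$ a fresh propositional variable not occurring in $\varphi$.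
   Context: Fix a countably infinite set $\mathcal{P}$ of propositional variables and a countably infinite set $\mathcal{S}$ of standpoint symbols containing a distinguished universal standpoint symbol $*$. SLTL formulae: $\varphi ::= p \mid s \preceq s' \mid \neg\varphi \mid \varphi\wedge\varphi \mid \Diamond_s\varphi \mid \Box_s\varphi \mid X\varphi \mid \varphi\,U\,\varphi$ ($p\in\mathcal{P}$, $s,s'\in\mathcal{S}$). A model is $M=(\Pi,\lambda)$ with $\Pi\neq\emptyset$ a set of traces $\sigma:\mathbb{N}\to 2^{\mathcal{P}}$ and $\lambda:\mathcal{S}\to 2^{\Pi}\setminus\{\emptyset\}$, $\lambda( * )=\Pi$. Semantics: $M,\sigma,i\models p$ iff $p\in\sigma(i)$; $M,\sigma,i\models s\preceq s'$ iff $\lambda(s)\subseteq\lambda(s')$; Boolean clauses as usual; $M,\sigma,i\models\Diamond_s\psi$ iff $M,\sigma',i\models\psi$ for some $\sigma'\in\lambda(s)$; $\Box_s$ dually with "for all"; $M,\sigma,i\models X\psi$ iff $M,\sigma,i+1\models\psi$; $M,\sigma,i\models\psi\,U\,\chi$ iff there is $i'\ge i$ with $M,\sigma,i'\models\chi$ and $M,\sigma,i''\models\psi$ for all $i\le i''<i'$. $G\psi$ abbreviates $\neg(\top\,U\,\neg\psi)$. $\varphi$ is satisfiable iff $M,\sigma,0\models\varphi$ for some $M=(\Pi,\lambda)$, $\sigma\in\Pi$. $\mathrm{LTL_{PSL}}$ is the fragment of SLTL consisting of formulae in which no temporal connective ($X$ or $U$) occurs in the scope of a standpoint modality $\Diamond_s$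 or $\Box_s$. *)

theory Defs
  imports Main "HOL-Library.Product_Lexorder"
begin

text \<open>Propositional variables and standpoint symbols are both represented by nat
  (countably infinite); the universal standpoint symbol * is the standpoint 0.\<close>

type_synonym pvar = nat
type_synonym sp = nat

definition star :: sp where "star = 0"

datatype fml =
    Prop pvar
  | Prec sp sp
  | Neg fml
  | Conj fml fml
  | Dia sp fml
  | Box sp fml
  | Next fml
  | Until fml fml

type_synonym trace = "nat \<Rightarrow> pvar set"

definition is_model :: "trace set \<Rightarrow> (sp \<Rightarrow> trace set) \<Rightarrow> bool" where
  "is_model Pi lam \<longleftrightarrow> Pi \<noteq> {} \<and> (\<forall>s. lam s \<subseteq> Pi \<and> lam s \<noteq> {}) \<and> lam star = Pi"

fun sem :: "(sp \<Rightarrow> trace set) \<Rightarrow> trace \<Rightarrow> nat \<Rightarrow> fml \<Rightarrow> bool" where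
  "sem lam \<sigma> i (Prop p) = (p \<in> \<sigma> i)"
| "sem lam \<sigma> i (Prec s s') = (lam s \<subseteq> lam s')"
| "sem lam \<sigma> i (Neg \<psi>) = (\<not> sem lam \<sigma> i \<psi>)"
| "sem lam \<sigma> i (Conj \<psi> \<chi>) = (sem lam \<sigma> i \<psi> \<and> sem lam \<sigma> i \<chi>)"
| "sem lam \<sigma> i (Dia s \<psi>) = (\<exists>\<sigma>'\<in>lam s. sem lam \<sigma>' i \<psi>)"
| "sem lam \<sigma> i (Box s \<psi>) = (\<forall>\<sigma>'\<in>lam s. sem lam \<sigma>' i \<psi>)"
| "sem lam \<sigma> i (Next \<psi>) = sem lam \<sigma> (Suc i) \<psi>"
| "sem lam \<sigma> i (Until \<psi> \<chi>) =
     (\<exists>i'\<ge>i. sem lam \<sigma> i' \<chi> \<and> (\<forall>i''. i \<le> i'' \<and> i'' < i' \<longrightarrow> sem lam \<sigma> i'' \<psi>))"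

definition satisfiable :: "fml \<Rightarrow> bool" where
  "satisfiable \<phi> \<longleftrightarrow> (\<exists>Pi lam \<sigma>. is_model Pi lam \<and> \<sigma> \<in> Pi \<and> sem lam \<sigma> 0 \<phi>)"

definition Top :: fml where "Top = Prec star star"
definition Bot :: fml where "Bot = Neg Top"

definition Glob :: "fml \<Rightarrow> fml" where "Glob \<psi> = Neg (Until Top (Neg \<psi>))"

fun temporal_free :: "fml \<Rightarrow> bool" where
  "temporal_free (Prop p) = True"
| "temporal_free (Prec s s') = True"
| "temporal_free (Neg \<psi>) = temporal_free \<psi>"
| "temporal_free (Conj \<psi> \<chi>) = (temporal_free \<psi> \<and> temporal_free \<chi>)"
| "temporal_free (Dia s \<psi>) = temporal_free \<psi>"
| "temporal_free (Box s \<psi>) = temporal_free \<psi>"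
| "temporal_free (Next \<psi>) = False"
| "temporal_free (Until \<psi> \<chi>) = False"

fun ltl_psl :: "fml \<Rightarrow> bool" where
  "ltl_psl (Prop p) = True"
| "ltl_psl (Prec s s') = True"
| "ltl_psl (Neg \<psi>) = ltl_psl \<psi>"
| "ltl_psl (Conj \<psi> \<chi>) = (ltl_psl \<psi> \<and> ltl_psl \<chi>)"
| "ltl_psl (Dia s \<psi>) = temporal_free \<psi>"
| "ltl_psl (Box s \<psi>) = temporal_free \<psi>"
| "ltl_psl (Next \<psi>) = ltl_psl \<psi>"
| "ltl_psl (Until \<psi> \<chi>) = (ltl_psl \<psi> \<and> ltl_psl \<chi>)"

fun subformulas :: "fml \<Rightarrow> fml set" where
  "subformulas (Prop p) = {Prop p}"
| "subformulas (Prec s s') = {Prec s s'}"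
| "subformulas (Neg \<psi>) = insert (Neg \<psi>) (subformulas \<psi>)"
| "subformulas (Conj \<psi> \<chi>) = insert (Conj \<psi> \<chi>) (subformulas \<psi> \<union> subformulas \<chi>)"
| "subformulas (Dia s \<psi>) = insert (Dia s \<psi>) (subformulas \<psi>)"
| "subformulas (Box s \<psi>) = insert (Box s \<psi>) (subformulas \<psi>)"
| "subformulas (Next \<psi>) = insert (Next \<psi>) (subformulas \<psi>)"
| "subformulas (Until \<psi> \<chi>) = insert (Until \<psi> \<chi>) (subformulas \<psi> \<union> subformulas \<chi>)"

fun props :: "fml \<Rightarrow> pvar set" where
  "props (Prop p) = {p}"
| "props (Prec s s') = {}"
| "props (Neg \<psi>) = props \<psi>"
| "props (Conj \<psi> \<chi>) = props \<psi> \<union> props \<chi>"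
| "props (Dia s \<psi>) = props \<psi>"
| "props (Box s \<psi>) = props \<psi>"
| "props (Next \<psi>) = props \<psi>"
| "props (Until \<psi> \<chi>) = props \<psi> \<union> props \<chi>"

definition incl_subf :: "fml \<Rightarrow> (sp \<times> sp) set" where
  "incl_subf \<phi> = {(s, s'). Prec s s' \<in> subformulas \<phi>}"

fun subst_incl :: "(sp \<times> sp) set \<Rightarrow> (sp \<times> sp) set \<Rightarrow> fml \<Rightarrow> fml" where
  "subst_incl P N (Prop p) = Prop p"
| "subst_incl P N (Prec s s') =
     (if (s, s') \<in> P then Top else if (s, s') \<in> N then Bot else Prec s s')"
| "subst_incl P N (Neg \<psi>) = Neg (subst_incl P N \<psi>)"
| "subst_incl P N (Conj \<psi> \<chi>) = Conj (subst_incl P N \<psi>) (subst_incl P N \<chi>)"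
| "subst_incl P N (Dia s \<psi>) = Dia s (subst_incl P N \<psi>)"
| "subst_incl P N (Box s \<psi>) = Box s (subst_incl P N \<psi>)"
| "subst_incl P N (Next \<psi>) = Next (subst_incl P N \<psi>)"
| "subst_incl P N (Until \<psi> \<chi>) = Until (subst_incl P N \<psi>) (subst_incl P N \<chi>)"

definition BigConj :: "fml list \<Rightarrow> fml" where
  "BigConj xs = foldr Conj xs Top"

text \<open>chi_D for the partition (P, N), with fresh variables given by f s s'.\<close>
definition chi :: "(sp \<times> sp) set \<Rightarrow> (sp \<times> sp) set \<Rightarrow> (sp \<Rightarrow> sp \<Rightarrow> pvar) \<Rightarrow> fml" where
  "chi P N f = Glob (Conj
     (BigConj (map (\<lambda>(s, s'). Prec s s') (sorted_list_of_set P)))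
     (BigConj (map (\<lambda>(s, s'). Conj (Dia s (Prop (f s s'))) (Neg (Dia s' (Prop (f s s')))))
        (sorted_list_of_set N))))"

definition phi_D :: "fml \<Rightarrow> (sp \<times> sp) set \<Rightarrow> (sp \<times> sp) set \<Rightarrow> (sp \<Rightarrow> sp \<Rightarrow> pvar) \<Rightarrow> fml" where
  "phi_D \<phi> P N f = Conj (subst_incl P N \<phi>) (chi P N f)"

end

theory Submission
  imports Defs
begin

text \<open>Since \<open>\<lambda>\<close> does not change over time, each inclusion \<open>s \<preceq> s'\<close> has one truth value
  in a model; the partition \<open>D\<close> records these values, and then \<open>\<phi>\<close> and its substitution
  instance agree. A failed inclusion is witnessed globally by a fresh variable \<open>p\<^sub>s\<^sub>,\<^sub>s\<^sub>'\<close>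
  made true exactly on the traces outside \<open>\<lambda>(s')\<close>. Relabelling the traces in this way
  changes neither the inclusions among the standpoints of \<open>\<phi>\<close> nor the variables of \<open>\<phi>\<close>,
  so \<open>\<phi>\<close> survives it. Conversely \<open>\<chi>\<^sub>D\<close> forces the inclusions prescribed by \<open>D\<close>.
  The argument never uses that \<open>\<phi>\<close> lies in \<open>LTL\<^sub>P\<^sub>S\<^sub>L\<close>.\<close>

lemma sem_Top [simp]: "sem lam \<sigma> i Top"
  by (simp add: Top_def)

lemma sem_Bot [simp]: "\<not> sem lam \<sigma> i Bot"
  by (simp add: Bot_def)

lemma sem_Glob: "sem lam \<sigma> i (Glob \<psi>) \<longleftrightarrow> (\<forall>j\<ge>i. sem lam \<sigma> j \<psi>)"
  by (auto simp: Glob_def)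

lemma sem_BigConj: "sem lam \<sigma> i (BigConj xs) \<longleftrightarrow> (\<forall>x\<in>set xs. sem lam \<sigma> i x)"
  by (induction xs) (auto simp: BigConj_def)

lemma sem_chi_iff:
  assumes "finite P" "finite N"
  shows "sem lam \<sigma> i (chi P N f) \<longleftrightarrow>
    (\<forall>(a, b)\<in>P. lam a \<subseteq> lam b) \<and>
    (\<forall>(a, b)\<in>N. \<forall>j\<ge>i. (\<exists>\<tau>\<in>lam a. f a b \<in> \<tau> j) \<and> (\<forall>\<tau>\<in>lam b. f a b \<notin> \<tau> j))"
  using assms unfolding chi_def sem_Glob by (auto simp: sem_BigConj case_prod_unfold; fastforce)

lemma sem_subst_incl:
  assumes "\<forall>(a, b)\<in>P. lam a \<subseteq> lam b" "\<forall>(a, b)\<in>N. \<not> lam a \<subseteq> lam b"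
  shows "sem lam \<sigma> i (subst_incl P N \<psi>) \<longleftrightarrow> sem lam \<sigma> i \<psi>"
  using assms by (induction \<psi> arbitrary: \<sigma> i) auto

lemma finite_subformulas: "finite (subformulas \<phi>)"
  by (induction \<phi>) auto

lemma finite_incl_subf: "finite (incl_subf \<phi>)"
proof -
  have "incl_subf \<phi> = (\<lambda>(a, b). Prec a b) -` subformulas \<phi>"
    by (auto simp: incl_subf_def)
  moreover have "inj (\<lambda>(a, b). Prec a b)"
    by (auto simp: inj_def)
  ultimately show ?thesis
    by (metis finite_subformulas finite_vimageI)
qed

lemma sem_image_traces:
  assumes "\<And>\<sigma> i p. p \<notin> F \<Longrightarrow> p \<in> g \<sigma> i \<longleftrightarrow> p \<in> \<sigma> i"
    and "props \<psi> \<inter> F = {}"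
    and "\<forall>a b. Prec a b \<in> subformulas \<psi> \<longrightarrow> (g ` lam a \<subseteq> g ` lam b \<longleftrightarrow> lam a \<subseteq> lam b)"
  shows "sem (\<lambda>s. g ` lam s) (g \<sigma>) i \<psi> \<longleftrightarrow> sem lam \<sigma> i \<psi>"
  using assms(2,3)
proof (induction \<psi> arbitrary: \<sigma> i)
  case (Prop p)
  then show ?case using assms(1) by simp
qed (simp_all add: Int_Un_distrib2)

definition mark_trace :: "(sp \<Rightarrow> sp \<Rightarrow> pvar) \<Rightarrow> (sp \<times> sp) set \<Rightarrow> (sp \<Rightarrow> trace set) \<Rightarrow> trace \<Rightarrow> trace"
  where "mark_trace f N lam \<sigma> =
    (\<lambda>i. (\<sigma> i - (\<lambda>(a, b). f a b) ` N) \<union> {f a b | a b. (a, b) \<in> N \<and> \<sigma> \<notin> lam b})"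

lemma mark_trace_outside:
  "p \<notin> (\<lambda>(a, b). f a b) ` N \<Longrightarrow> p \<in> mark_trace f N lam \<sigma> i \<longleftrightarrow> p \<in> \<sigma> i"
  by (auto simp: mark_trace_def)

lemma mark_trace_fresh:
  assumes "inj_on (\<lambda>(a, b). f a b) N" "(a, b) \<in> N"
  shows "f a b \<in> mark_trace f N lam \<sigma> i \<longleftrightarrow> \<sigma> \<notin> lam b"
proof -
  have "f a b = f c d \<longleftrightarrow> (c, d) = (a, b)" if "(c, d) \<in> N" for c d
    using inj_onD[OF assms(1) _ that assms(2)] by auto
  then show ?thesis
    using assms(2) by (auto simp: mark_trace_def)
qed

lemma satisfiable_phi_D_of_model:
  assumes fresh: "\<forall>(s, s') \<in> incl_subf \<phi>. f s s' \<notin> props \<phi>"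
    and distinct: "inj_on (\<lambda>(s, s'). f s s') (incl_subf \<phi>)"
    and model: "is_model Pi lam" "\<sigma> \<in> Pi" "sem lam \<sigma> 0 \<phi>"
  defines "P \<equiv> {(a, b) \<in> incl_subf \<phi>. lam a \<subseteq> lam b}"
    and "N \<equiv> {(a, b) \<in> incl_subf \<phi>. \<not> lam a \<subseteq> lam b}"
  shows "satisfiable (phi_D \<phi> P N f)"
proof -
  define g where "g = mark_trace f N lam"
  define lam' where "lam' s = g ` lam s" for s
  have finite: "finite P" "finite N"
    using finite_incl_subf[of \<phi>] by (auto simp: P_def N_def intro: finite_subset)
  have incl_P: "lam' a \<subseteq> lam' b" if "(a, b) \<in> P" for a b
    using that by (auto simp: P_def lam'_def)
  have witness_N: "(\<exists>\<tau>\<in>lam' a. f a b \<in> \<tau> j) \<and> (\<forall>\<tau>\<in>lam' b. f a b \<notin> \<tau> j)"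
    if ab: "(a, b) \<in> N" for a b j
  proof -
    have inj: "inj_on (\<lambda>(a, b). f a b) N"
      using distinct by (rule inj_on_subset) (auto simp: N_def)
    obtain \<tau> where "\<tau> \<in> lam a" "\<tau> \<notin> lam b"
      using ab unfolding N_def by blast
    then show ?thesis
      using mark_trace_fresh[OF inj ab] by (auto simp: lam'_def g_def)
  qed
  have not_incl_N: "\<not> lam' a \<subseteq> lam' b" if "(a, b) \<in> N" for a b
    using witness_N[OF that, of 0] by blast
  have "sem lam' (g \<sigma>) 0 \<phi> \<longleftrightarrow> sem lam \<sigma> 0 \<phi>"
    unfolding lam'_def
  proof (rule sem_image_traces[where F = "(\<lambda>(a, b). f a b) ` N"])
    show "p \<in> g \<tau> i \<longleftrightarrow> p \<in> \<tau> i" if "p \<notin> (\<lambda>(a, b). f a b) ` N" for \<tau> i p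
      using that by (simp add: g_def mark_trace_outside)
    show "props \<phi> \<inter> (\<lambda>(a, b). f a b) ` N = {}"
      using fresh by (auto simp: N_def)
    show "\<forall>a b. Prec a b \<in> subformulas \<phi> \<longrightarrow> (g ` lam a \<subseteq> g ` lam b \<longleftrightarrow> lam a \<subseteq> lam b)"
    proof (intro allI impI)
      fix a b
      assume "Prec a b \<in> subformulas \<phi>"
      then have "(a, b) \<in> (if lam a \<subseteq> lam b then P else N)"
        by (simp add: P_def N_def incl_subf_def)
      then show "g ` lam a \<subseteq> g ` lam b \<longleftrightarrow> lam a \<subseteq> lam b"
        using incl_P not_incl_N unfolding lam'_def by (metis (full_types))
    qed
  qed
  moreover have "\<forall>(a, b)\<in>P. lam' a \<subseteq> lam' b" "\<forall>(a, b)\<in>N. \<not> lam' a \<subseteq> lam' b"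
    using incl_P not_incl_N by blast+
  ultimately have "sem lam' (g \<sigma>) 0 (subst_incl P N \<phi>)"
    using model(3) sem_subst_incl by metis
  moreover have "sem lam' (g \<sigma>) 0 (chi P N f)"
    unfolding sem_chi_iff[OF finite] using incl_P witness_N by blast
  moreover have "is_model (g ` Pi) lam'"
    using model(1) by (auto simp: is_model_def lam'_def)
  ultimately show ?thesis
    using model(2) by (auto simp: satisfiable_def phi_D_def)
qed

lemma satisfiable_of_phi_D:
  assumes "finite P" "finite N" "satisfiable (phi_D \<phi> P N f)"
  shows "satisfiable \<phi>"
proof -
  obtain Pi lam \<sigma> where model: "is_model Pi lam" "\<sigma> \<in> Pi"
    and sem: "sem lam \<sigma> 0 (subst_incl P N \<phi>)" "sem lam \<sigma> 0 (chi P N f)"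
    using assms(3) by (auto simp: satisfiable_def phi_D_def)
  have "\<forall>(a, b)\<in>P. lam a \<subseteq> lam b" "\<forall>(a, b)\<in>N. \<not> lam a \<subseteq> lam b"
    using sem(2) assms(1,2) by (fastforce simp: sem_chi_iff)+
  then show ?thesis
    using model sem(1) by (auto simp: satisfiable_def sem_subst_incl)
qed

theorem lemma3:
  fixes \<phi> :: fml and f :: "sp \<Rightarrow> sp \<Rightarrow> pvar"
  assumes "ltl_psl \<phi>"
    and fresh: "\<forall>(s, s') \<in> incl_subf \<phi>. f s s' \<notin> props \<phi>"
    and distinct: "inj_on (\<lambda>(s, s'). f s s') (incl_subf \<phi>)"
  shows "satisfiable \<phi> \<longleftrightarrow>
    (\<exists>P N. P \<union> N = incl_subf \<phi> \<and> P \<inter> N = {} \<and> satisfiable (phi_D \<phi> P N f))"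
proof
  assume "satisfiable \<phi>"
  then obtain Pi lam \<sigma> where "is_model Pi lam" "\<sigma> \<in> Pi" "sem lam \<sigma> 0 \<phi>"
    by (auto simp: satisfiable_def)
  let ?P = "{(a, b) \<in> incl_subf \<phi>. lam a \<subseteq> lam b}"
  let ?N = "{(a, b) \<in> incl_subf \<phi>. \<not> lam a \<subseteq> lam b}"
  have "?P \<union> ?N = incl_subf \<phi>" "?P \<inter> ?N = {}"
    by auto
  with satisfiable_phi_D_of_model[OF fresh distinct \<open>is_model Pi lam\<close> \<open>\<sigma> \<in> Pi\<close> \<open>sem lam \<sigma> 0 \<phi>\<close>]
  show "\<exists>P N. P \<union> N = incl_subf \<phi> \<and> P \<inter> N = {} \<and> satisfiable (phi_D \<phi> P N f)"
    by blast
next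
  assume "\<exists>P N. P \<union> N = incl_subf \<phi> \<and> P \<inter> N = {} \<and> satisfiable (phi_D \<phi> P N f)"
  then show "satisfiable \<phi>"
    using satisfiable_of_phi_D finite_incl_subf by (metis finite_Un)
qed

end
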